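(* Let $\lambda\in(0,1)$ and $\Lambda=1-2\lambda^2$. A nonconstant meromorphic solution $\nabla$ of the differential equation $\big[\tfrac98(\nabla')^2+\Lambda(\nabla-1)\big]^2=\nabla(\nabla-1)^2(4\nabla-3)^2$ can have no zeros.
   Context: Here $\nabla$ denotes an unknown meromorphic function of a complex variable (on a connected open subset of $\mathbb{C}$), not an operator; $\nabla'$ is its derivative. *)

theory Defs
  imports "HOL-Complex_Analysis.Complex_Analysis"
begin

end

theory Submission
  imports Defs
begin

(* Let z0 be a zero of order m > 0 of the solution.  The right-hand side vanishes to order
   exactly m there, since (f - 1)^2 (4 f - 3)^2 does not vanish at z0; the left-hand side is the
   square of G = 9/8 f'^2 + Lambda (f - 1), so m = 2 ord G.  Hence m >= 2, so f'(z0) = 0 and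
   G(z0) = -Lambda, which forces Lambda = 0.  But then G = 9/8 f'^2 vanishes to order 2 (m - 1),
   and m = 4 (m - 1) has no integer solution.  The argument is run on Laurent expansions and works
   for every value of Lambda. *)

lemma subdegree_fps_deriv:
  fixes P :: "'a::{ring_char_0, ring_no_zero_divisors} fps"
  assumes "subdegree P > 0"
  shows "subdegree (fps_deriv P) = subdegree P - 1"
proof (rule subdegreeI)
  have "P $ subdegree P \<noteq> 0"
    using assms by (metis less_numeral_extra(3) nth_subdegree_nonzero subdegree_0)
  then show "fps_deriv P $ (subdegree P - 1) \<noteq> 0"
    using assms by simp
next
  fix i assume "i < subdegree P - 1"
  then show "fps_deriv P $ i = 0"
    by (simp add: nth_less_subdegree_zero)
qed

lemma fps_ode_no_solution_vanishing_at_0: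
  fixes P Q :: "'a::field_char_0 fps"
  assumes "P \<noteq> 0" "P $ 0 = 0" "a \<noteq> 0" "Q $ 0 \<noteq> 0"
    and ode: "(fps_const a * (fps_deriv P)\<^sup>2 + fps_const L * (P - 1))\<^sup>2 = P * Q"
  shows False
proof -
  define m where "m = subdegree P"
  define G where "G = fps_const a * (fps_deriv P)\<^sup>2 + fps_const L * (P - 1)"
  have "m > 0"
    using assms(1,2) subdegree_eq_0_iff[of P] by (simp add: m_def)
  have "Q \<noteq> 0" "subdegree Q = 0"
    using assms(4) by auto
  then have "subdegree (G\<^sup>2) = m"
    using ode assms(1) by (simp add: G_def m_def)
  moreover have "G \<noteq> 0"
    using calculation \<open>m > 0\<close> by auto
  ultimately have m_eq: "m = 2 * subdegree G"
    by (simp add: subdegree_power)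
  then have "P $ 1 = 0"
    using \<open>m > 0\<close> by (intro nth_less_subdegree_zero) (simp add: m_def)
  then have "G $ 0 = - L"
    using assms(2) by (simp add: G_def fps_nth_power_0)
  show False
  proof (cases "L = 0")
    case False
    then show False
      using \<open>G $ 0 = - L\<close> m_eq \<open>m > 0\<close> by (simp add: subdegree_eq_0_iff)
  next
    case True
    have "subdegree (fps_deriv P) = m - 1"
      using \<open>m > 0\<close> subdegree_fps_deriv by (simp add: m_def)
    moreover have "fps_deriv P \<noteq> 0"
      using assms(1,2) by (auto simp: fps_deriv_eq_0_iff)
    ultimately have "subdegree G = 2 * (m - 1)"
      using True assms(3) by (simp add: G_def subdegree_power)
    then show False
      using m_eq \<open>m > 0\<close> by simp
  qed
qed

lemma fls_ode_no_solution_vanishing_at_0: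
  fixes F :: "'a::field_char_0 fls"
  assumes "F \<noteq> 0" "fls_subdegree F > 0"
    and ode: "(fls_const a * (fls_deriv F)\<^sup>2 + fls_const L * (F - 1))\<^sup>2
              = F * (F - 1)\<^sup>2 * (fls_const 4 * F - 3)\<^sup>2"
    and "a \<noteq> 0"
  shows False
proof -
  define P where "P = fls_regpart F"
  have F_eq: "F = fps_to_fls P"
    using assms(2) by (simp add: P_def)
  have "P \<noteq> 0"
    using assms(1) F_eq by auto
  have "subdegree P > 0"
    using assms(2) F_eq by (simp add: fls_subdegree_fls_to_fps)
  then have "P $ 0 = 0"
    by (intro nth_less_subdegree_zero)
  have "fps_to_fls ((fps_const a * (fps_deriv P)\<^sup>2 + fps_const L * (P - 1))\<^sup>2)
      = fps_to_fls (P * ((P - 1)\<^sup>2 * (fps_const 4 * P - 3)\<^sup>2))"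
    using ode unfolding F_eq
    by (simp add: fls_times_fps_to_fls fps_to_fls_power fls_deriv_fps_to_fls mult.assoc)
  then have "(fps_const a * (fps_deriv P)\<^sup>2 + fps_const L * (P - 1))\<^sup>2
      = P * ((P - 1)\<^sup>2 * (fps_const 4 * P - 3)\<^sup>2)"
    by simp
  moreover have "((P - 1)\<^sup>2 * (fps_const 4 * P - 3)\<^sup>2) $ 0 \<noteq> 0"
    using \<open>P $ 0 = 0\<close> by (simp add: fps_nth_power_0)
  ultimately show False
    using fps_ode_no_solution_vanishing_at_0 \<open>P \<noteq> 0\<close> \<open>P $ 0 = 0\<close> assms(4) by blast
qed

lemma laurent_expansion_eq_0_imp_vanishing:
  assumes "open D" "connected D" "f meromorphic_on D" "z0 \<in> D"
    and "laurent_expansion f z0 = 0" "z \<in> D" "f analytic_on {z}"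
  shows "f z = 0"
proof -
  have "(\<lambda>w. f (z0 + w)) has_laurent_expansion laurent_expansion f z0"
    using assms(3,4) by (rule meromorphic_on_imp_has_laurent_expansion)
  then have "eventually (\<lambda>w. f w = 0) (at z0)"
    using assms(5) has_laurent_expansion_eventually_zero_iff by blast
  moreover have "eventually (\<lambda>w. remove_sings f w = f w) (at z0)"
    using eventually_remove_sings_eq assms(3,4) eventually_cosparse_imp_eventually_at by blast
  ultimately have "eventually (\<lambda>w. remove_sings f w = 0) (at z0)"
    by eventually_elim simp
  then have "frequently (\<lambda>w. remove_sings f w = 0) (at z0)"
    by (simp add: eventually_frequently)
  then have "remove_sings f z = 0"
    using frequently_eq_meromorphic_imp_constant remove_sings_nicely_meromorphic assms(1-4,6)
    by blast
  then show ?thesis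
    using assms(7) by simp
qed

lemma laurent_expansion_satisfies_ode:
  fixes f :: "complex \<Rightarrow> complex"
  assumes "open D" "f meromorphic_on D" "z0 \<in> D"
    and ode: "\<forall>z\<in>D. f analytic_on {z} \<longrightarrow>
           (9/8 * (deriv f z)\<^sup>2 + L * (f z - 1))\<^sup>2 = f z * (f z - 1)\<^sup>2 * (4 * f z - 3)\<^sup>2"
  defines "F \<equiv> laurent_expansion f z0"
  shows "(fls_const (9/8) * (fls_deriv F)\<^sup>2 + fls_const L * (F - 1))\<^sup>2
       = F * (F - 1)\<^sup>2 * (fls_const 4 * F - 3)\<^sup>2"
proof -
  have f_exp: "(\<lambda>w. f (z0 + w)) has_laurent_expansion F"
    unfolding F_def using assms(2,3) by (rule meromorphic_on_imp_has_laurent_expansion)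
  have "deriv (\<lambda>w. f (z0 + w)) has_laurent_expansion fls_deriv F"
    using f_exp by (rule has_laurent_expansion_deriv)
  also have "deriv (\<lambda>w. f (z0 + w)) = (\<lambda>w. deriv f (z0 + w))"
    by (simp add: deriv_shift_0' add_ac o_def fun_eq_iff)
  finally have f'_exp: "(\<lambda>w. deriv f (z0 + w)) has_laurent_expansion fls_deriv F" .
  have "eventually (\<lambda>z. z \<in> D \<and> f analytic_on {z}) (at z0)"
    using eventually_at_in_open'[OF assms(1,3)]
      eventually_cosparse_imp_eventually_at[OF meromorphic_on_imp_analytic_cosparse[OF assms(2)] assms(3)]
    by eventually_elim blast
  then have "eventually (\<lambda>w. z0 + w \<in> D \<and> f analytic_on {z0 + w}) (at 0)"
    by (simp add: eventually_at_to_0[of _ z0] add.commute)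
  then have eq: "eventually (\<lambda>w. (9/8 * (deriv f (z0 + w))\<^sup>2 + L * (f (z0 + w) - 1))\<^sup>2
      = f (z0 + w) * (f (z0 + w) - 1)\<^sup>2 * (4 * f (z0 + w) - 3)\<^sup>2) (at 0)"
    by eventually_elim (use ode in blast)
  have "(\<lambda>w. (9/8 * (deriv f (z0 + w))\<^sup>2 + L * (f (z0 + w) - 1))\<^sup>2)
      has_laurent_expansion (fls_const (9/8) * (fls_deriv F)\<^sup>2 + fls_const L * (F - 1))\<^sup>2"
    by (intro laurent_expansion_intros f_exp f'_exp)
  then have "(\<lambda>w. f (z0 + w) * (f (z0 + w) - 1)\<^sup>2 * (4 * f (z0 + w) - 3)\<^sup>2)
      has_laurent_expansion (fls_const (9/8) * (fls_deriv F)\<^sup>2 + fls_const L * (F - 1))\<^sup>2"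
    using has_laurent_expansion_cong[OF eq refl] by simp
  moreover have "(\<lambda>w. f (z0 + w) * (f (z0 + w) - 1)\<^sup>2 * (4 * f (z0 + w) - 3)\<^sup>2)
      has_laurent_expansion F * (F - 1)\<^sup>2 * (fls_const 4 * F - 3)\<^sup>2"
    by (intro laurent_expansion_intros f_exp)
  ultimately show ?thesis
    by (rule has_laurent_expansion_unique)
qed

theorem theorem9:
  fixes lam :: real and Lam :: real and f :: "complex \<Rightarrow> complex" and D :: "complex set"
  assumes "0 < lam" and "lam < 1"
    and "Lam = 1 - 2 * lam\<^sup>2"
    and "open D" and "connected D"
    and "f meromorphic_on D"
    and "\<not> (\<exists>c. \<forall>z\<in>D. f analytic_on {z} \<longrightarrow> f z = c)"
    and "\<forall>z\<in>D. f analytic_on {z} \<longrightarrow>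
           (9/8 * (deriv f z)\<^sup>2 + of_real Lam * (f z - 1))\<^sup>2
             = f z * (f z - 1)\<^sup>2 * (4 * f z - 3)\<^sup>2"
  shows "\<not> (\<exists>z\<in>D. (f \<longlongrightarrow> 0) (at z))"
proof
  assume "\<exists>z\<in>D. (f \<longlongrightarrow> 0) (at z)"
  then obtain z0 where "z0 \<in> D" and "(f \<longlongrightarrow> 0) (at z0)"
    by blast
  define F where "F = laurent_expansion f z0"
  have "F \<noteq> 0"
    using laurent_expansion_eq_0_imp_vanishing assms(4-7) \<open>z0 \<in> D\<close> unfolding F_def by blast
  moreover have "fls_subdegree F > 0"
    using tendsto_0_subdegree_iff meromorphic_on_imp_has_laurent_expansion
      assms(6) \<open>z0 \<in> D\<close> \<open>(f \<longlongrightarrow> 0) (at z0)\<close> \<open>F \<noteq> 0\<close> unfolding F_def by blast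
  moreover have "(fls_const (9/8) * (fls_deriv F)\<^sup>2 + fls_const (of_real Lam) * (F - 1))\<^sup>2
      = F * (F - 1)\<^sup>2 * (fls_const 4 * F - 3)\<^sup>2"
    unfolding F_def using laurent_expansion_satisfies_ode assms(4,6,8) \<open>z0 \<in> D\<close> by blast
  ultimately show False
    by (rule fls_ode_no_solution_vanishing_at_0) simp
qed

end
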